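(* Let $\sigma:\mathbb{R}\to\mathbb{R}$ be either a continuous and strictly monotonic function or the ReLU function $\sigma(t)=\max\{t,0\}$. Let $F:\mathbb{R}^{d_{in}}\to\mathbb{R}^{d_{out}}$ be a neural network function with activation function $\sigma$ and width $\omega_F\le d_{in}$. Then for every $j\in\{1,\dots,d_{out}\}$, every non-empty connected component of the decision region $C_j$ of $F$ is unbounded.
   Context: A neural network function $F:\mathbb{R}^{d_{in}}\to\mathbb{R}^{d_{out}}$ with $L$ layers and activation $\sigma$ has the form $F=W_L\circ A_{L-1}\circ\dots\circ A_1$, where $A_j(x)=\sigma(W_jx+b_j)$ with $W_j\in\mathbb{R}^{d_j\times d_{j-1}}$, $b_j\in\mathbb{R}^{d_j}$, $d_0=d_{in}$, $d_L=d_{out}$, $W_L\in\mathbb{R}^{d_L\times d_{L-1}}$, and $\sigma$ is applied componentwise. The width of $F$ is $\omega_F=\max\{d_j:j=1,\dots,L\}$. Writing $F=(F_1,\dots,F_{d_{out}})$, the decision region of class $j$ is $C_j=\{x\in\mathbb{R}^{d_{in}}:F_j(x)>F_k(x)\text{ for all }k\neq j\}$. A set $C\subset\mathbb{R}^d$ is connected if there are no disjoint open sets $U,V\subset\mathbb{R}^d$ with $C\subset U\cup V$ and $C\cap U$, $C\cap V$ both non-empty; the connected components of an open set are its maximal connected subsets. *)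

theory Defs
  imports "HOL-Analysis.Analysis"
begin

text \<open>Neural networks with explicit layer dimensions d 0, ..., d L (d 0 = d_in, d L = d_out).
  Layer j (1 \<le> j \<le> L) has weight matrix W j :: nat => nat => real (entries W j i k with
  i < d j, k < d (j-1)) and bias b j :: nat => real (entries i < d j).
  Vectors of dimension m are represented as functions nat => real, only indices < m matter.\<close>

definition affine :: "nat \<Rightarrow> (nat \<Rightarrow> nat \<Rightarrow> real) \<Rightarrow> (nat \<Rightarrow> real) \<Rightarrow> (nat \<Rightarrow> real) \<Rightarrow> nat \<Rightarrow> real" where
  "affine m W b v = (\<lambda>i. (\<Sum>k<m. W i k * v k) + b i)"

fun hidden :: "(real \<Rightarrow> real) \<Rightarrow> (nat \<Rightarrow> nat) \<Rightarrow> (nat \<Rightarrow> nat \<Rightarrow> nat \<Rightarrow> real) \<Rightarrow> (nat \<Rightarrow> nat \<Rightarrow> real)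
                \<Rightarrow> nat \<Rightarrow> (nat \<Rightarrow> real) \<Rightarrow> (nat \<Rightarrow> real)" where
  "hidden \<sigma> d W b 0 v = v"
| "hidden \<sigma> d W b (Suc j) v = (\<lambda>i. \<sigma> (affine (d j) (W (Suc j)) (b (Suc j)) (hidden \<sigma> d W b j v) i))"

definition nn_fun :: "(real \<Rightarrow> real) \<Rightarrow> nat \<Rightarrow> (nat \<Rightarrow> nat) \<Rightarrow> (nat \<Rightarrow> nat \<Rightarrow> nat \<Rightarrow> real) \<Rightarrow> (nat \<Rightarrow> nat \<Rightarrow> real)
                \<Rightarrow> (nat \<Rightarrow> real) \<Rightarrow> (nat \<Rightarrow> real)" where
  "nn_fun \<sigma> L d W b v = (\<lambda>i. \<Sum>k< d (L - 1). W L i k * hidden \<sigma> d W b (L - 1) v k)"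

definition nn_width :: "nat \<Rightarrow> (nat \<Rightarrow> nat) \<Rightarrow> nat" where
  "nn_width L d = Max (d ` {1..L})"

text \<open>Input space R^(d_in) is real^'n; coordinates are listed via a bijection
  e : {0..<CARD('n)} -> 'n, giving the input vector (\<lambda>k. x $ e k).\<close>
definition decision_region :: "((real^'n) \<Rightarrow> (nat \<Rightarrow> real)) \<Rightarrow> nat \<Rightarrow> nat \<Rightarrow> (real^'n) set" where
  "decision_region F dout j = {x. \<forall>k<dout. k \<noteq> j \<longrightarrow> F x j > F x k}"

end

theory Submission
  imports Defs
begin

text \<open>Induction on the depth. A one-layer network is linear, so its decision regions are cones
  and every point of a region lies on a ray inside it. A network of depth L+1 is a network of
  depth L precomposed with y \<mapsto> \<sigma>(W y + b), the first layer. If W has a nontrivial kernel (in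
  particular if the first layer is narrower than the input), the region is invariant under
  translations along it. Otherwise the property "open, with only unbounded components" passes to
  preimages under the affine bijection, under the componentwise map of an injective continuous
  \<sigma> (by invariance of domain, the image of a bounded component would be a bounded clopen part
  of the target), and under the componentwise ReLU (a bounded component stays inside the open
  positive orthant, where ReLU is the identity).\<close>

definition all_components_unbounded :: "'a::metric_space set \<Rightarrow> bool" where
  "all_components_unbounded U \<longleftrightarrow> (\<forall>x\<in>U. \<not> bounded (connected_component_set U x))"

lemma unbounded_connected_component:
  assumes "connected S" "x \<in> S" "S \<subseteq> U" "\<not> bounded S"
  shows "\<not> bounded (connected_component_set U x)"
  using connected_component_maximal[OF assms(2,1,3)] assms(4) bounded_subset by blast

lemma connected_ray: "connected ((\<lambda>t. x + t *\<^sub>R u) ` {0..})"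
  for x u :: "'a::real_normed_vector"
  by (intro connected_continuous_image continuous_intros is_interval_connected)
    (auto simp: is_interval_def)

lemma unbounded_ray:
  fixes x u :: "'a::real_normed_vector"
  assumes "u \<noteq> 0"
  shows "\<not> bounded ((\<lambda>t. x + t *\<^sub>R u) ` {0..})"
proof
  assume "bounded ((\<lambda>t. x + t *\<^sub>R u) ` {0..})"
  then obtain B where B: "\<And>t. t \<ge> 0 \<Longrightarrow> norm (x + t *\<^sub>R u) \<le> B"
    by (auto simp: bounded_iff)
  define t where "t = (B + norm x + 1) / norm u"
  have "norm x \<le> B" using B[of 0] by simp
  then have "B + norm x + 1 > 0" using norm_ge_zero[of x] by linarith
  then have "t \<ge> 0" and "t * norm u = B + norm x + 1"
    using assms by (auto simp: t_def)
  moreover have "norm (t *\<^sub>R u) \<le> norm (x + t *\<^sub>R u) + norm x"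
    using norm_triangle_ineq4[of "x + t *\<^sub>R u" x] by simp
  ultimately show False using B[of t] by simp
qed

lemma unbounded_connected_component_ray:
  fixes x u :: "'a::real_normed_vector"
  assumes "u \<noteq> 0" "\<And>t. t \<ge> 0 \<Longrightarrow> x + t *\<^sub>R u \<in> U"
  shows "\<not> bounded (connected_component_set U x)"
proof (rule unbounded_connected_component[OF connected_ray])
  show "x \<in> (\<lambda>t. x + t *\<^sub>R u) ` {0..}" by (rule image_eqI[of _ _ 0]) auto
  show "(\<lambda>t. x + t *\<^sub>R u) ` {0..} \<subseteq> U" using assms(2) by auto
  show "\<not> bounded ((\<lambda>t. x + t *\<^sub>R u) ` {0..})" using assms(1) by (rule unbounded_ray)
qed

lemma all_components_unbounded_if_rays:
  fixes U :: "'a::real_normed_vector set"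
  assumes "\<And>x. x \<in> U \<Longrightarrow> \<exists>u\<noteq>0. \<forall>t\<ge>0. x + t *\<^sub>R u \<in> U"
  shows "all_components_unbounded U"
  unfolding all_components_unbounded_def
proof
  fix x assume "x \<in> U"
  then obtain u where "u \<noteq> 0" "\<forall>t\<ge>0. x + t *\<^sub>R u \<in> U" using assms by blast
  then show "\<not> bounded (connected_component_set U x)"
    by (intro unbounded_connected_component_ray) auto
qed

lemma all_components_unbounded_clopen_unbounded:
  assumes "all_components_unbounded U" "open A" "A \<subseteq> U" "U \<inter> closure A \<subseteq> A" "a \<in> A"
  shows "\<not> bounded A"
proof -
  let ?C = "connected_component_set U a"
  have "connectedin (top_of_set U) ?C"
    by (simp add: connectedin_subtopology connected_component_subset)
  moreover have "closedin (top_of_set U) A"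
    unfolding closedin_closed using assms(3,4) closure_subset by (intro exI[of _ "closure A"]) blast
  moreover have "openin (top_of_set U) A"
    unfolding openin_open using assms(2,3) by (intro exI[of _ A]) blast
  ultimately have "?C \<subseteq> A \<or> disjnt ?C A" by (rule connectedin_clopen_cases)
  moreover have "a \<in> ?C" using assms(3,5) by auto
  ultimately have "?C \<subseteq> A" using assms(5) by (auto simp: disjnt_iff)
  then show ?thesis
    using assms(1,3,5) bounded_subset unfolding all_components_unbounded_def by blast
qed

lemma Int_closure_connected_component_subset:
  "S \<inter> closure (connected_component_set S x) \<subseteq> connected_component_set S x"
proof -
  obtain T where "closed T" "connected_component_set S x = S \<inter> T"
    using closedin_connected_component[of S x] by (auto simp: closedin_closed)
  then show ?thesis using closure_minimal[of _ T] by blast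
qed

lemma all_components_unbounded_vimage_noninj:
  fixes M :: "'a::real_normed_vector \<Rightarrow> 'b::real_normed_vector"
  assumes "linear M" "\<not> inj M"
  shows "all_components_unbounded (M -` S)"
proof (rule all_components_unbounded_if_rays)
  obtain u where "u \<noteq> 0" "M u = 0" using assms linear_injective_0 by blast
  then show "\<exists>u\<noteq>0. \<forall>t\<ge>0. x + t *\<^sub>R u \<in> M -` S" if "x \<in> M -` S" for x
    using that assms(1) by (auto simp: linear_add linear_scale)
qed

lemma all_components_unbounded_vimage_inj:
  fixes f :: "'a::euclidean_space \<Rightarrow> 'a"
  assumes f: "continuous_on UNIV f" "inj f" and U: "open U" "all_components_unbounded U"
  shows "all_components_unbounded (f -` U)"
  unfolding all_components_unbounded_def
proof (intro ballI notI)
  fix x assume x: "x \<in> f -` U"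
  define Z where "Z = connected_component_set (f -` U) x"
  assume "bounded Z"
  then have "compact (f ` closure Z)"
    by (intro compact_continuous_image continuous_on_subset[OF f(1)]) (auto simp: compact_closure)
  then have closed: "closed (f ` closure Z)" and bounded: "bounded (f ` closure Z)"
    by (auto intro: compact_imp_closed compact_imp_bounded)
  have "open Z"
    unfolding Z_def by (intro open_connected_component open_vimage U(1) f(1))
  then have "open (f ` Z)"
    using invariance_of_domain[OF continuous_on_subset[OF f(1)]] inj_on_subset[OF f(2)] by blast
  moreover have "f ` Z \<subseteq> U" using connected_component_subset[of "f -` U" x] by (auto simp: Z_def)
  moreover have "U \<inter> closure (f ` Z) \<subseteq> f ` Z"
  proof
    fix p assume p: "p \<in> U \<inter> closure (f ` Z)"
    then obtain q where "q \<in> closure Z" "p = f q"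
      using closure_minimal[OF image_mono[OF closure_subset] closed] by blast
    moreover have "f -` U \<inter> closure Z \<subseteq> Z"
      unfolding Z_def by (rule Int_closure_connected_component_subset)
    ultimately show "p \<in> f ` Z" using p by blast
  qed
  moreover have "f x \<in> f ` Z" using x by (simp add: Z_def)
  ultimately have "\<not> bounded (f ` Z)" by (rule all_components_unbounded_clopen_unbounded[OF U(2)])
  moreover have "f ` Z \<subseteq> f ` closure Z" using closure_subset by (rule image_mono)
  ultimately show False using bounded bounded_subset by blast
qed

definition componentwise :: "(real \<Rightarrow> real) \<Rightarrow> real^'n \<Rightarrow> real^'n" where
  "componentwise \<sigma> z = (\<chi> i. \<sigma> (z $ i))"

lemma continuous_on_componentwise:
  assumes "continuous_on UNIV \<sigma>"
  shows "continuous_on UNIV (componentwise \<sigma>)"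
  unfolding componentwise_def
  by (intro continuous_on_vec_lambda
      continuous_on_compose2[OF assms linear_continuous_on[OF bounded_linear_vec_nth]]) auto

lemma inj_componentwise:
  assumes "inj \<sigma>"
  shows "inj (componentwise \<sigma>)"
proof (rule injI)
  fix y z assume "componentwise \<sigma> y = componentwise \<sigma> z"
  then have "\<sigma> (y$i) = \<sigma> (z$i)" for i by (metis componentwise_def vec_lambda_beta)
  then show "y = z" using assms by (simp add: vec_eq_iff inj_eq)
qed

lemma positive_if_bounded_component_vimage_relu:
  fixes U :: "(real^'n) set"
  defines "V \<equiv> componentwise (\<lambda>t. max t 0) -` U"
  assumes bounded: "bounded (connected_component_set V x)"
    and z: "z \<in> connected_component_set V x"
  shows "0 < z $ i"
proof (rule ccontr)
  assume "\<not> 0 < z $ i"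
  then have "componentwise (\<lambda>t. max t 0) (z + t *\<^sub>R - axis i 1) = componentwise (\<lambda>t. max t 0) z"
    if "t \<ge> 0" for t
    using that by (auto simp: componentwise_def vec_eq_iff axis_def)
  moreover have "z \<in> V" using z connected_component_subset by blast
  ultimately have ray: "z + t *\<^sub>R - axis i 1 \<in> V" if "t \<ge> 0" for t using that by (simp add: V_def)
  have "- axis i 1 \<noteq> (0::real^'n)" by (simp add: axis_eq_0_iff)
  then have "\<not> bounded (connected_component_set V z)"
    using ray by (rule unbounded_connected_component_ray)
  then show False using bounded z connected_component_eq[of z V x] by simp
qed

lemma all_components_unbounded_vimage_relu:
  fixes U :: "(real^'n) set"
  assumes U: "open U" "all_components_unbounded U"
  shows "all_components_unbounded (componentwise (\<lambda>t. max t 0) -` U)"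
  unfolding all_components_unbounded_def
proof (intro ballI notI)
  let ?relu = "componentwise (\<lambda>t. max t 0)"
  let ?V = "?relu -` U"
  have relu_id: "?relu z = z" if "\<forall>i. 0 \<le> z$i" for z
    using that by (simp add: componentwise_def vec_eq_iff)
  fix x assume x: "x \<in> ?V"
  define Z where "Z = connected_component_set ?V x"
  assume bounded: "bounded Z"
  then have Z_pos: "\<forall>i. 0 < z$i" if "z \<in> Z" for z
    using that positive_if_bounded_component_vimage_relu by (auto simp: Z_def)
  have "continuous_on UNIV (\<lambda>t::real. max t 0)" by (intro continuous_intros)
  then have "open Z"
    unfolding Z_def by (intro open_connected_component open_vimage U(1) continuous_on_componentwise)
  moreover have "Z \<subseteq> U"
  proof
    fix z assume z: "z \<in> Z"
    then have "?relu z = z" using Z_pos relu_id less_imp_le by blast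
    moreover have "z \<in> ?V" using z connected_component_subset by (auto simp: Z_def)
    ultimately show "z \<in> U" by simp
  qed
  moreover have "U \<inter> closure Z \<subseteq> Z"
  proof
    fix p assume p: "p \<in> U \<inter> closure Z"
    have "closure Z \<subseteq> {z. \<forall>i. 0 \<le> z$i}"
      using Z_pos by (intro closure_minimal closed_positive_orthant) (auto simp: less_imp_le)
    then have "?relu p = p" using p relu_id by blast
    then have "p \<in> ?V \<inter> closure Z" using p by simp
    then show "p \<in> Z" using Int_closure_connected_component_subset[of ?V x] by (simp add: Z_def subset_iff)
  qed
  moreover have "x \<in> Z" using x by (simp add: Z_def)
  ultimately have "\<not> bounded Z" by (rule all_components_unbounded_clopen_unbounded[OF U(2)])
  then show False using bounded by blast
qed

lemma all_components_unbounded_vimage_componentwise: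
  fixes U :: "(real^'n) set"
  assumes \<sigma>: "continuous_on UNIV \<sigma>" "inj \<sigma> \<or> \<sigma> = (\<lambda>t. max t 0)"
    and U: "open U" "all_components_unbounded U"
  shows "all_components_unbounded (componentwise \<sigma> -` U)"
  using \<sigma>(2) all_components_unbounded_vimage_relu[OF U]
    all_components_unbounded_vimage_inj[OF continuous_on_componentwise[OF \<sigma>(1)] inj_componentwise U]
  by blast

lemma open_decision_region:
  assumes "\<And>i. continuous_on UNIV (\<lambda>y. F y i)"
  shows "open (decision_region F m j)"
proof -
  have "decision_region F m j = (\<Inter>k\<in>{k. k < m \<and> k \<noteq> j}. {y. F y k < F y j})"
    unfolding decision_region_def by auto
  then show ?thesis
    by (auto intro!: open_INT open_Collect_less assms)
qed

lemma all_components_unbounded_decision_region_homogeneous: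
  assumes hom: "\<And>t y i. F (t *\<^sub>R y) i = t * F y i"
  shows "all_components_unbounded (decision_region F m j)"
proof (rule all_components_unbounded_if_rays)
  fix x assume x: "x \<in> decision_region F m j"
  show "\<exists>u\<noteq>0. \<forall>t\<ge>0. x + t *\<^sub>R u \<in> decision_region F m j"
  proof (cases "x = 0")
    case True
    have "F 0 i = 0" for i using hom[of 0 0 i] by simp
    then have "decision_region F m j = UNIV" using x True by (auto simp: decision_region_def)
    moreover obtain i :: 'a where True by blast
    then have "axis i 1 \<noteq> (0::real^'a)" by (simp add: axis_eq_0_iff)
    ultimately show ?thesis by blast
  next
    case False
    have "x + t *\<^sub>R x \<in> decision_region F m j" if "t \<ge> 0" for t
    proof -
      have "x + t *\<^sub>R x = (1 + t) *\<^sub>R x" by (simp add: algebra_simps)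
      moreover have "(1 + t) * F x k < (1 + t) * F x j" if "k < m" "k \<noteq> j" for k
        using x that \<open>t \<ge> 0\<close> by (intro mult_strict_left_mono) (auto simp: decision_region_def)
      ultimately show ?thesis by (simp add: decision_region_def hom)
    qed
    then show ?thesis using False by blast
  qed
qed

lemma hidden_Suc_shift:
  "hidden \<sigma> d W b (Suc j) v =
     hidden \<sigma> (\<lambda>l. d (Suc l)) (\<lambda>l. W (Suc l)) (\<lambda>l. b (Suc l)) j
       (\<lambda>i. \<sigma> (affine (d 0) (W 1) (b 1) v i))"
  by (induction j) auto

lemma nn_fun_Suc_shift:
  assumes "1 \<le> L"
  shows "nn_fun \<sigma> (Suc L) d W b v =
     nn_fun \<sigma> L (\<lambda>l. d (Suc l)) (\<lambda>l. W (Suc l)) (\<lambda>l. b (Suc l))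
       (\<lambda>i. \<sigma> (affine (d 0) (W 1) (b 1) v i))"
  using assms hidden_Suc_shift[of \<sigma> d W b "L - 1" v] by (simp add: nn_fun_def)

lemma hidden_cong:
  assumes "\<And>k. k < d 0 \<Longrightarrow> v k = v' k" "i < d j"
  shows "hidden \<sigma> d W b j v i = hidden \<sigma> d W b j v' i"
  using assms(2)
proof (induction j arbitrary: i)
  case 0
  then show ?case using assms(1) by simp
next
  case (Suc j)
  then show ?case by (simp add: affine_def)
qed

lemma nn_fun_cong:
  assumes "\<And>k. k < d 0 \<Longrightarrow> v k = v' k"
  shows "nn_fun \<sigma> L d W b v = nn_fun \<sigma> L d W b v'"
  using hidden_cong[OF assms] by (simp add: nn_fun_def)

lemma continuous_on_hidden:
  assumes "continuous_on UNIV \<sigma>"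
  shows "continuous_on UNIV (\<lambda>y::real^'n. hidden \<sigma> d W b j (\<lambda>k. y $ e k) i)"
proof (induction j arbitrary: i)
  case 0
  then show ?case by (simp add: linear_continuous_on[OF bounded_linear_vec_nth])
next
  case (Suc j)
  have "continuous_on UNIV
      (\<lambda>y::real^'n. affine (d j) (W (Suc j)) (b (Suc j)) (hidden \<sigma> d W b j (\<lambda>k. y $ e k)) i)"
    unfolding affine_def by (intro continuous_intros Suc)
  then show ?case by (simp add: continuous_on_compose2[OF assms])
qed

lemma continuous_on_nn_fun:
  assumes "continuous_on UNIV \<sigma>"
  shows "continuous_on UNIV (\<lambda>y::real^'n. nn_fun \<sigma> L d W b (\<lambda>k. y $ e k) i)"
  unfolding nn_fun_def by (intro continuous_intros continuous_on_hidden assms)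

lemma nn_fun_Suc_componentwise:
  fixes e :: "nat \<Rightarrow> 'n::finite"
  assumes e: "bij_betw e {..<CARD('n)} UNIV"
    and L: "1 \<le> L" and d: "d 0 = CARD('n)" "d 1 \<le> CARD('n)"
  obtains M c where "linear M" "inj M \<Longrightarrow> d 1 = CARD('n)"
    "\<And>y. nn_fun \<sigma> (Suc L) d W b (\<lambda>k. y $ e k) =
       nn_fun \<sigma> L (\<lambda>l. d (Suc l)) (\<lambda>l. W (Suc l)) (\<lambda>l. b (Suc l))
         (\<lambda>k. componentwise \<sigma> (M y + c) $ e k)"
proof
  define ie where "ie = inv_into {..<CARD('n)} e"
  have ie_e: "ie (e k) = k" if "k < CARD('n)" for k
    using e that by (simp add: ie_def bij_betw_inv_into_left)
  \<comment> \<open>the first weight matrix, reindexed by e and padded with zero rows up to a square matrix\<close>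
  define M where "M y = (\<chi> i. if ie i < d 1 then \<Sum>k<CARD('n). W 1 (ie i) k * y $ e k else 0)"
    for y :: "real^'n"
  define c :: "real^'n" where "c = (\<chi> i. b 1 (ie i))"
  show "linear M"
    by (rule linearI) (auto simp: M_def vec_eq_iff sum.distrib sum_distrib_left algebra_simps)
  show "d 1 = CARD('n)" if "inj M"
  proof (rule ccontr)
    assume "d 1 \<noteq> CARD('n)"
    then have "d 1 < CARD('n)" using d(2) by simp
    then have "M y $ e (d 1) = 0" for y by (simp add: M_def ie_e)
    moreover have "surj M" using linear_injective_imp_surjective[OF \<open>linear M\<close> that] by simp
    then obtain y where "M y = axis (e (d 1)) 1" by (metis surjD)
    ultimately show False by (metis axis_nth zero_neq_one)
  qed
  show "nn_fun \<sigma> (Suc L) d W b (\<lambda>k. y $ e k) =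
     nn_fun \<sigma> L (\<lambda>l. d (Suc l)) (\<lambda>l. W (Suc l)) (\<lambda>l. b (Suc l))
       (\<lambda>k. componentwise \<sigma> (M y + c) $ e k)" for y
    unfolding nn_fun_Suc_shift[OF L]
    by (rule nn_fun_cong) (use d in \<open>simp add: componentwise_def M_def c_def affine_def ie_e\<close>)
qed

lemma all_components_unbounded_decision_region:
  fixes e :: "nat \<Rightarrow> 'n::finite"
  assumes \<sigma>: "continuous_on UNIV \<sigma>" "inj \<sigma> \<or> \<sigma> = (\<lambda>t. max t 0)"
    and e: "bij_betw e {..<CARD('n)} UNIV"
    and "1 \<le> L" "d 0 = CARD('n)" "\<forall>l\<in>{1..L}. d l \<le> CARD('n)"
  shows "all_components_unbounded (decision_region (\<lambda>y. nn_fun \<sigma> L d W b (\<lambda>k. y $ e k)) m j)"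
  using assms(4-)
proof (induction L arbitrary: d W b rule: nat_induct_at_least)
  case base
  show ?case
    by (rule all_components_unbounded_decision_region_homogeneous)
      (simp add: nn_fun_def sum_distrib_left mult_ac)
next
  case (Suc L)
  let ?F' = "\<lambda>h. nn_fun \<sigma> L (\<lambda>l. d (Suc l)) (\<lambda>l. W (Suc l)) (\<lambda>l. b (Suc l)) (\<lambda>k. h $ e k)"
  define R' where "R' = decision_region ?F' m j"
  have "d 1 \<le> CARD('n)" using Suc.prems(2) by auto
  then obtain M c where M: "linear M" "inj M \<Longrightarrow> d 1 = CARD('n)"
    and F: "\<And>y. nn_fun \<sigma> (Suc L) d W b (\<lambda>k. y $ e k) = ?F' (componentwise \<sigma> (M y + c))"
    using nn_fun_Suc_componentwise[where \<sigma> = \<sigma> and d = d and W = W and b = b,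
        OF e Suc.hyps(1) Suc.prems(1)]
    by blast
  have "decision_region (\<lambda>y. nn_fun \<sigma> (Suc L) d W b (\<lambda>k. y $ e k)) m j =
      M -` ((\<lambda>z. z + c) -` (componentwise \<sigma> -` R'))"
    by (simp add: decision_region_def R'_def F)
  also have "all_components_unbounded \<dots>"
  proof (cases "inj M")
    case False
    then show ?thesis by (rule all_components_unbounded_vimage_noninj[OF M(1)])
  next
    case True
    have "continuous_on UNIV (\<lambda>y. M y + c)"
      using M(1) by (intro continuous_intros linear_continuous_on) (simp add: linear_conv_bounded_linear)
    moreover have "inj (\<lambda>y. M y + c)" using True by (simp add: inj_def)
    moreover have "open (componentwise \<sigma> -` R')"
      unfolding R'_def
      by (intro open_vimage open_decision_region continuous_on_nn_fun continuous_on_componentwise \<sigma>(1))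
    moreover have "all_components_unbounded (componentwise \<sigma> -` R')"
      unfolding R'_def using Suc M(2)[OF True]
      by (intro all_components_unbounded_vimage_componentwise \<sigma> open_decision_region
          continuous_on_nn_fun) auto
    ultimately have "all_components_unbounded ((\<lambda>y. M y + c) -` (componentwise \<sigma> -` R'))"
      by (rule all_components_unbounded_vimage_inj)
    then show ?thesis by (simp add: vimage_def)
  qed
  finally show ?case .
qed

theorem theorem10:
  fixes \<sigma> :: "real \<Rightarrow> real"
    and L :: nat and d :: "nat \<Rightarrow> nat"
    and W :: "nat \<Rightarrow> nat \<Rightarrow> nat \<Rightarrow> real" and b :: "nat \<Rightarrow> nat \<Rightarrow> real"
    and e :: "nat \<Rightarrow> 'n::finite"
  assumes act: "(continuous_on UNIV \<sigma> \<and>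
                   ((\<forall>s t. s < t \<longrightarrow> \<sigma> s < \<sigma> t) \<or> (\<forall>s t. s < t \<longrightarrow> \<sigma> s > \<sigma> t)))
                \<or> \<sigma> = (\<lambda>t. max t 0)"
    and L: "L \<ge> 1"
    and din: "d 0 = CARD('n)"
    and e: "bij_betw e {..<CARD('n)} UNIV"
    and width: "nn_width L d \<le> d 0"
    and j: "j < d L"
    and x: "x \<in> decision_region (\<lambda>y. nn_fun \<sigma> L d W b (\<lambda>k. y $ e k)) (d L) j"
  shows "\<not> bounded (connected_component_set
                 (decision_region (\<lambda>y. nn_fun \<sigma> L d W b (\<lambda>k. y $ e k)) (d L) j) x)"
proof -
  have "continuous_on UNIV \<sigma>" using act by (auto intro!: continuous_intros)
  moreover have "inj \<sigma> \<or> \<sigma> = (\<lambda>t. max t 0)"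
    using act by (metis injI less_irrefl linorder_neqE)
  moreover have "\<forall>l\<in>{1..L}. d l \<le> CARD('n)"
    using width din Max_ge[of "d ` {1..L}"] by (auto simp: nn_width_def)
  ultimately have "all_components_unbounded
      (decision_region (\<lambda>y. nn_fun \<sigma> L d W b (\<lambda>k. y $ e k)) (d L) j)"
    using all_components_unbounded_decision_region[where d = d, OF _ _ e L din] by blast
  then show ?thesis using x by (simp add: all_components_unbounded_def)
qed

end
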